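(* Let $\mathcal I=\mathbb R^d$, $\mathcal T$ its unit sphere, $\mathcal G$ a compact Abelian group with normalized Haar measure $dg$ acting on $\mathcal I$ by a unitary representation, and $\mathcal G_0\subset\mathcal G$ measurable with $V=\int_{\mathcal G_0}dg>0$. For $I\in\mathcal I$, $\bar g\in\mathcal G$ let $\rho_{I,\bar g}$ be the probability measure on $\mathcal I$ given by $\rho_{I,\bar g}(A)=\frac1V\int_{\{g\in\bar g\mathcal G_0:\ gI\in A\}}dg$. For $t\in\mathcal T$ and a probability measure $\rho$ on $\mathcal I$, let $\rho^t$ be its pushforward to $\mathbb R$ under $I\mapsto\langle I,t\rangle$. Define the TP-POG representation $\bar\Psi(I):\mathcal G\times\mathcal T\to\mathcal P(\mathbb R)$ by $\bar\Psi(I)(g,t)=(\rho_{I,g})^t$. Then $\bar\Psi$ is covariant: for all $I\in\mathcal I$, $\tilde g,g\in\mathcal G$, $t\in\mathcal T$, $$\bar\Psi(\tilde gI)(g,t)=\bar\Psi(I)(\tilde gg,t).$$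
   Context: $\bar g\mathcal G_0=\{\bar g g': g'\in\mathcal G_0\}$; $\mathcal P(\mathbb R)$ is the set of Borel probability measures on $\mathbb R$. *)

theory Defs
  imports "HOL-Analysis.Analysis" "HOL-Probability.Probability"
begin

definition normalized_haar :: "'g::{ab_group_add, topological_space} measure \<Rightarrow> bool" where
  "normalized_haar M \<longleftrightarrow> prob_space M \<and> sets M = sets (borel :: 'g measure)
     \<and> (\<forall>h. distr M M (\<lambda>g. h + g) = M)"

definition unitary_rep :: "('g::{ab_group_add, topological_space} \<Rightarrow> real^'n \<Rightarrow> real^'n) \<Rightarrow> bool" where
  "unitary_rep \<pi> \<longleftrightarrow> (\<forall>g. orthogonal_transformation (\<pi> g)) \<and> \<pi> 0 = id
     \<and> (\<forall>g h. \<pi> (g + h) = \<pi> g \<circ> \<pi> h) \<and> (\<forall>x. continuous_on UNIV (\<lambda>g. \<pi> g x))"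

definition rho :: "'g::{ab_group_add, topological_space} measure \<Rightarrow> ('g \<Rightarrow> real^'n \<Rightarrow> real^'n)
    \<Rightarrow> 'g set \<Rightarrow> real^'n \<Rightarrow> 'g \<Rightarrow> (real^'n) measure" where
  "rho M \<pi> G0 I gbar =
     distr (density M (\<lambda>g. indicator ((\<lambda>g'. gbar + g') ` G0) g / ennreal (measure M G0)))
           borel (\<lambda>g. \<pi> g I)"

definition proj_measure :: "(real^'n) measure \<Rightarrow> real^'n \<Rightarrow> real measure" where
  "proj_measure \<rho> t = distr \<rho> borel (\<lambda>I. I \<bullet> t)"

definition PsiBar :: "'g::{ab_group_add, topological_space} measure \<Rightarrow> ('g \<Rightarrow> real^'n \<Rightarrow> real^'n)
    \<Rightarrow> 'g set \<Rightarrow> real^'n \<Rightarrow> 'g \<Rightarrow> real^'n \<Rightarrow> real measure" where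
  "PsiBar M \<pi> G0 I g t = proj_measure (rho M \<pi> G0 I g) t"

end

theory Submission
  imports Defs
begin

text \<open>The window of \<open>rho I g\<close> is the translate \<open>g + G0\<close>. Translating the sampling
  variable by \<open>gt\<close> preserves the Haar measure, carries the window \<open>gt + g + G0\<close> of
  \<open>rho I (gt + g)\<close> onto \<open>g + G0\<close>, and turns \<open>\<pi> (gt + h) I\<close> into \<open>\<pi> h (\<pi> gt I)\<close>.
  So the measures on \<open>R\<^sup>d\<close> already agree, before projecting onto \<open>t\<close>.\<close>

lemma translate_image_eq_vimage:
  "(\<lambda>x. (b::'g::ab_group_add) + x) ` A = (\<lambda>x. x - b) -` A"
  by (auto simp: image_iff) (metis add.commute diff_add_cancel)

lemma continuous_measurable_borel_sets:
  assumes "sets M = sets borel" "sets N = sets borel" "continuous_on UNIV f"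
  shows "f \<in> measurable M N"
  using assms by (simp add: measurable_cong_sets[OF assms(1,2)] borel_measurable_continuous_onI)

lemma rho_covariant:
  fixes M :: "'g::{ab_group_add, topological_group_add} measure"
  assumes "normalized_haar M" "unitary_rep \<pi>" "G0 \<in> sets M"
  shows "rho M \<pi> G0 (\<pi> gt I) g = rho M \<pi> G0 I (gt + g)"
proof -
  have sM: "sets M = sets borel" and haar_inv: "distr M M (\<lambda>x. gt + x) = M"
    using assms(1) unfolding normalized_haar_def by auto
  have hom: "\<pi> (a + b) = \<pi> a \<circ> \<pi> b" for a b
    using assms(2) unfolding unitary_rep_def by auto
  have orbit_M: "(\<lambda>h. \<pi> h x) \<in> borel_measurable M" for x
    using assms(2) sM unfolding unitary_rep_def by (intro continuous_measurable_borel_sets) auto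
  have shift_M: "(\<lambda>x. gt + x) \<in> measurable M M"
    using sM by (intro continuous_measurable_borel_sets continuous_intros) auto
  define w where "w = (\<lambda>b h. indicator ((\<lambda>x. b + x) ` G0) h / ennreal (measure M G0))"
  have w_M: "w b \<in> borel_measurable M" for b
  proof -
    have "(\<lambda>x. x - b) \<in> measurable M M"
      using sM by (intro continuous_measurable_borel_sets continuous_intros) auto
    from measurable_sets[OF this assms(3)] have "(\<lambda>x. b + x) ` G0 \<in> sets M"
      by (simp add: translate_image_eq_vimage sets_eq_imp_space_eq[OF sM])
    then show ?thesis
      unfolding w_def by measurable
  qed
  have w_shift: "(\<lambda>h. w (gt + g) (gt + h)) = w g"
    by (auto simp: w_def indicator_def image_iff algebra_simps)
  have "rho M \<pi> G0 I (gt + g) = distr (density M (w (gt + g))) borel (\<lambda>h. \<pi> h I)"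
    unfolding rho_def w_def ..
  also have "\<dots> = distr (distr (density M (w g)) M (\<lambda>x. gt + x)) borel (\<lambda>h. \<pi> h I)"
    using density_distr[OF w_M shift_M] haar_inv w_shift by simp
  also have "\<dots> = distr (density M (w g)) borel ((\<lambda>h. \<pi> h I) \<circ> (\<lambda>x. gt + x))"
    by (rule distr_distr) (auto simp: orbit_M shift_M)
  also have "(\<lambda>h. \<pi> h I) \<circ> (\<lambda>x. gt + x) = (\<lambda>h. \<pi> h (\<pi> gt I))"
    by (auto simp: hom add.commute)
  finally show ?thesis
    unfolding rho_def w_def ..
qed

theorem theorem9:
  fixes M :: "'g::{ab_group_add, topological_group_add, t2_space} measure"
    and \<pi> :: "'g \<Rightarrow> real^'n \<Rightarrow> real^'n"
    and G0 :: "'g set"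
  assumes "compact (UNIV :: 'g set)"
    and "normalized_haar M"
    and "unitary_rep \<pi>"
    and "G0 \<in> sets M"
    and "measure M G0 > 0"
  shows "\<forall>I gt g t. norm t = 1 \<longrightarrow>
           PsiBar M \<pi> G0 (\<pi> gt I) g t = PsiBar M \<pi> G0 I (gt + g) t"
  using rho_covariant[OF assms(2-4)] by (simp add: PsiBar_def)

end
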